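(* Let $\tau>0$, $a\ge2$, let $s,d$ be integers with $1\le s\le d$ and $d=4k$ for an integer $k$. Let $\hat\sigma_*^2=\frac2d\sum_{1\le k\le d/2}Y^2_{(k)}$. Then $$\sup_{P_\xi\in\mathcal G_{a,\tau}}\sup_{\sigma>0}\sup_{\theta\in\Theta_s}\frac{\mathbf E_{\theta,P_\xi,\sigma}(\hat\sigma_*^2-\sigma^2)^2}{\sigma^4}\ge\frac1{64}.$$
   Context: Model: $Y_i=\theta_i+\sigma\xi_i$, $i=1,\dots,d$, $\theta\in\mathbb R^d$, $\sigma>0$, $\xi_i$ i.i.d. with distribution $P_\xi$; $\mathbf E_{\theta,P_\xi,\sigma}$ expectation; $\Theta_s=\{\theta:\|\theta\|_0\le s\}$. $\mathcal G_{a,\tau}$: distributions with $\mathbf E\xi_1=0,\mathbf E\xi_1^2=1$, $\mathbf P(|\xi_1|>t)\le2e^{-(t/\tau)^a}$ for all $t\ge2$. $Y^2_{(1)}\le\dots\le Y^2_{(d)}$ are the ordered values of $Y_1^2,\dots,Y_d^2$. *)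

theory Defs
  imports "HOL-Probability.Probability"
begin

definition noise_class :: "real \<Rightarrow> real \<Rightarrow> real measure set" where
  "noise_class a \<tau> = {P. prob_space P \<and> sets P = sets borel \<and>
      integrable P (\<lambda>x. x) \<and> (\<integral>x. x \<partial>P) = 0 \<and>
      integrable P (\<lambda>x. x\<^sup>2) \<and> (\<integral>x. x\<^sup>2 \<partial>P) = 1 \<and>
      (\<forall>t\<ge>2. measure P {x. \<bar>x\<bar> > t} \<le> 2 * exp (- ((t / \<tau>) powr a)))}"

definition Theta :: "nat \<Rightarrow> nat \<Rightarrow> (nat \<Rightarrow> real) set" where
  "Theta d s = {\<theta>. \<theta> \<in> ({..<d} \<rightarrow>\<^sub>E UNIV) \<and> card {i\<in>{..<d}. \<theta> i \<noteq> 0} \<le> s}"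

definition sigma_hat_sq :: "nat \<Rightarrow> (nat \<Rightarrow> real) \<Rightarrow> real" where
  "sigma_hat_sq d Y = 2 / real d * sum_list (take (d div 2) (sort (map (\<lambda>i. (Y i)\<^sup>2) [0..<d])))"

end

theory Submission
  imports Defs
begin

text \<open>It suffices to exhibit one noise law in the class under which the estimator is badly biased.
  Take \<open>\<sigma> = 1\<close>, \<open>\<theta> = 0\<close> and \<open>\<xi>\<close> equal to \<open>0\<close> with probability \<open>3/4\<close> and to \<open>\<plusminus>2\<close> with
  probability \<open>1/8\<close> each: it is centred, has unit variance and bounded support. Whenever at most
  \<open>d/2\<close> of the \<open>Y\<^sub>i\<close> are nonzero, the \<open>d/2\<close> smallest \<open>Y\<^sub>i\<^sup>2\<close> all vanish, the estimator is \<open>0\<close>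
  and the squared error is \<open>1\<close>. Pointwise the error is therefore at least \<open>1 - (2/d) N\<close>, where \<open>N\<close>
  counts the nonzero coordinates, and since \<open>E N = d/4\<close> the risk is at least \<open>1/2\<close>.\<close>

lemma sorted_sum_list_take_le_sum_mset:
  fixes xs :: "'a::{linorder, ordered_comm_monoid_add} list"
  assumes "sorted xs" "M \<subseteq># mset xs" "size M = m"
  shows "sum_list (take m xs) \<le> sum_mset M"
  using assms
proof (induction xs arbitrary: M m)
  case Nil
  then show ?case by simp
next
  case (Cons x xs)
  show ?case
  proof (cases m)
    case 0
    then show ?thesis using Cons.prems by simp
  next
    case (Suc k)
    show ?thesis
    proof (cases "x \<in># M")
      case True
      then obtain M' where M: "M = add_mset x M'" by (metis insert_DiffM)
      have "sum_list (take k xs) \<le> sum_mset M'"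
        using Cons.prems Suc M by (intro Cons.IH) auto
      then show ?thesis using M Suc by (simp add: add_left_mono)
    next
      case False
      then have sub: "M \<subseteq># mset xs" using Cons.prems(2)
        by (simp add: inter_add_left1 subset_mset.inf.absorb_iff2)
      obtain y M' where M: "M = add_mset y M'"
        using Cons.prems(3) Suc by (metis size_eq_Suc_imp_eq_union)
      have "sum_list (take k xs) \<le> sum_mset M'"
        using Cons.prems(1,3) Suc M sub by (intro Cons.IH) (auto dest: mset_subset_eq_insertD)
      moreover have "x \<le> y" using Cons.prems(1) sub M by (auto dest: mset_subset_eqD)
      ultimately show ?thesis using M Suc by (simp add: add_mono)
    qed
  qed
qed

lemma one_le_ennreal_one_minus_plus: "(1::ennreal) \<le> ennreal (1 - t) + ennreal t"
proof (cases "0 \<le> t \<and> t \<le> 1")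
  case True
  then show ?thesis by (simp flip: ennreal_plus)
next
  case False
  then have "1 \<le> ennreal (1 - t) \<or> 1 \<le> ennreal t" by (auto intro: ennreal_leI)
  then show ?thesis by (auto intro: add_increasing add_increasing2)
qed

lemma (in prob_space) nn_integral_one_minus_ge:
  assumes [measurable]: "f \<in> borel_measurable M"
    and int: "(\<integral>\<^sup>+x. ennreal (f x) \<partial>M) = ennreal r" and "0 \<le> r"
  shows "ennreal (1 - r) \<le> (\<integral>\<^sup>+x. ennreal (1 - f x) \<partial>M)"
proof -
  have "1 = (\<integral>\<^sup>+x. 1 \<partial>M)" by (simp add: emeasure_space_1)
  also have "\<dots> \<le> (\<integral>\<^sup>+x. ennreal (1 - f x) + ennreal (f x) \<partial>M)"
    by (intro nn_integral_mono one_le_ennreal_one_minus_plus)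
  also have "\<dots> = (\<integral>\<^sup>+x. ennreal (1 - f x) \<partial>M) + ennreal r"
    by (subst nn_integral_add) (auto simp: int)
  finally show ?thesis
    using \<open>0 \<le> r\<close> by (simp add: ennreal_minus[symmetric] ennreal_minus_le_iff add.commute)
qed

lemma nn_integral_PiM_card_components_in:
  assumes P: "prob_space P" and "finite I" and A: "A \<in> sets P"
  shows "(\<integral>\<^sup>+\<omega>. of_nat (card {i\<in>I. \<omega> i \<in> A}) \<partial>PiM I (\<lambda>_. P)) = of_nat (card I) * emeasure P A"
proof -
  interpret product_prob_space "\<lambda>_. P" I
    by (simp add: product_prob_space_def product_sigma_finite_def P prob_space_imp_sigma_finite
        product_prob_space_axioms_def)
  have "(\<integral>\<^sup>+\<omega>. of_nat (card {i\<in>I. \<omega> i \<in> A}) \<partial>PiM I (\<lambda>_. P))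
      = (\<integral>\<^sup>+\<omega>. (\<Sum>i\<in>I. indicator {\<omega>\<in>space (PiM I (\<lambda>_. P)). \<omega> i \<in> A} \<omega>) \<partial>PiM I (\<lambda>_. P))"
    using \<open>finite I\<close> by (intro nn_integral_cong) (simp add: indicator_def sum.If_cases Int_def)
  also have "\<dots> = (\<Sum>i\<in>I. emeasure P A)"
    using A by (subst nn_integral_sum) (auto simp: emeasure_PiM_Collect_single)
  finally show ?thesis by simp
qed

lemma borel_measurable_card_components_in:
  assumes "finite I" and "A \<in> sets P"
  shows "(\<lambda>\<omega>. real (card {i\<in>I. \<omega> i \<in> A})) \<in> borel_measurable (PiM I (\<lambda>_. P))"
proof -
  have "(\<lambda>\<omega>. \<Sum>i\<in>I. indicator A (\<omega> i) :: real) \<in> borel_measurable (PiM I (\<lambda>_. P))"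
    by (intro borel_measurable_sum measurable_compose[OF measurable_component_singleton]
        borel_measurable_indicator assms(2))
  moreover have "real (card {i\<in>I. \<omega> i \<in> A}) = (\<Sum>i\<in>I. indicator A (\<omega> i))" for \<omega>
    using \<open>finite I\<close> by (simp add: indicator_def sum.If_cases Int_def)
  ultimately show ?thesis by simp
qed

lemma sigma_hat_sq_cong:
  assumes "\<And>i. i < d \<Longrightarrow> Y i = Y' i"
  shows "sigma_hat_sq d Y = sigma_hat_sq d Y'"
proof -
  have "map (\<lambda>i. (Y i)\<^sup>2) [0..<d] = map (\<lambda>i. (Y' i)\<^sup>2) [0..<d]"
    using assms by (intro map_cong) auto
  then show ?thesis unfolding sigma_hat_sq_def by (simp only:)
qed

lemma sigma_hat_sq_eq_0:
  assumes "card {i\<in>{..<d}. Y i \<noteq> 0} \<le> d div 2"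
  shows "sigma_hat_sq d Y = 0"
proof -
  define ys where "ys = map (\<lambda>i. (Y i)\<^sup>2) [0..<d]"
  have nonzero_sub: "{i\<in>{..<d}. Y i \<noteq> 0} \<subseteq> {..<d}" by blast
  have "card {i\<in>{..<d}. Y i = 0} = card ({..<d} - {i\<in>{..<d}. Y i \<noteq> 0})"
    by (rule arg_cong[where f = card]) blast
  also have "\<dots> = d - card {i\<in>{..<d}. Y i \<noteq> 0}"
    using card_Diff_subset[OF finite_subset[OF nonzero_sub finite_lessThan] nonzero_sub] by simp
  finally have "card {i\<in>{..<d}. Y i = 0} = d - card {i\<in>{..<d}. Y i \<noteq> 0}" .
  moreover have "d div 2 \<le> d - c" if "c \<le> d div 2" for c using that by presburger
  ultimately have "d div 2 \<le> card {i\<in>{..<d}. Y i = 0}" using assms by simp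
  then obtain T where T: "T \<subseteq> {i\<in>{..<d}. Y i = 0}" "card T = d div 2" "finite T"
    by (rule obtain_subset_with_card_n)
  have "image_mset (\<lambda>i. (Y i)\<^sup>2) (mset_set T) \<subseteq># mset (sort ys)"
    using T(1) unfolding ys_def mset_sort mset_map mset_upt
    by (intro image_mset_subseteq_mono subset_imp_msubset_mset_set) auto
  then have "sum_list (take (d div 2) (sort ys)) \<le> (\<Sum>i\<in>T. (Y i)\<^sup>2)"
    using T(2,3)
    by (auto intro!: sorted_sum_list_take_le_sum_mset simp: sum_unfold_sum_mset)
  also have "(\<Sum>i\<in>T. (Y i)\<^sup>2) = 0" using T(1) by (intro sum.neutral) auto
  finally have "sum_list (take (d div 2) (sort ys)) \<le> 0" .
  moreover have "0 \<le> sum_list (take (d div 2) (sort ys))"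
  proof (rule sum_list_nonneg)
    fix x assume "x \<in> set (take (d div 2) (sort ys))"
    then have "x \<in> set ys" by (metis in_set_takeD set_sort)
    then show "0 \<le> x" unfolding ys_def by auto
  qed
  ultimately show ?thesis unfolding sigma_hat_sq_def ys_def by simp
qed

lemma sigma_hat_sq_error_ge:
  "1 - 2 / real d * card {i\<in>{..<d}. Y i \<noteq> 0} \<le> (sigma_hat_sq d Y - 1)\<^sup>2"
proof (cases "card {i\<in>{..<d}. Y i \<noteq> 0} \<le> d div 2")
  case True
  then show ?thesis by (simp add: sigma_hat_sq_eq_0)
next
  case False
  then have "real d < 2 * card {i\<in>{..<d}. Y i \<noteq> 0}" by linarith
  then have "1 - 2 / real d * card {i\<in>{..<d}. Y i \<noteq> 0} < 0"
    by (cases "d = 0") (auto simp: field_simps)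
  then show ?thesis by (smt (verit) zero_le_power2)
qed

definition three_point_pmf :: "real pmf" where
  "three_point_pmf = pmf_of_multiset {#0, 0, 0, 0, 0, 0, 2, -2#}"

definition three_point_noise :: "real measure" where
  "three_point_noise = distr (measure_pmf three_point_pmf) borel (\<lambda>x. x)"

lemma set_pmf_three_point_pmf: "set_pmf three_point_pmf = {0, 2, -2}"
  unfolding three_point_pmf_def by (subst set_pmf_of_multiset) auto

lemma pmf_three_point_pmf:
  "pmf three_point_pmf x = (if x = 0 then 3/4 else if x = 2 \<or> x = -2 then 1/8 else 0)"
  unfolding three_point_pmf_def by (subst pmf_of_multiset) auto

lemma prob_space_three_point_noise: "prob_space three_point_noise"
  unfolding three_point_noise_def by (auto intro: prob_space.prob_space_distr measure_pmf.prob_space_axioms)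

lemma sets_three_point_noise [simp]: "sets three_point_noise = sets borel"
  unfolding three_point_noise_def by simp

lemma integral_three_point_noise:
  fixes f :: "real \<Rightarrow> real"
  assumes "f \<in> borel_measurable borel"
  shows "(\<integral>x. f x \<partial>three_point_noise) = 3/4 * f 0 + 1/8 * f 2 + 1/8 * f (-2)"
  unfolding three_point_noise_def using assms
  by (subst integral_distr, simp_all, subst integral_measure_pmf_real[where A = "{0, 2, -2}"])
    (auto simp: set_pmf_three_point_pmf pmf_three_point_pmf)

lemma integrable_three_point_noise:
  "f \<in> borel_measurable borel \<Longrightarrow> integrable three_point_noise (f :: real \<Rightarrow> real)"
  unfolding three_point_noise_def
  by (subst integrable_distr_eq) (auto simp: set_pmf_three_point_pmf intro!: integrable_measure_pmf_finite)

lemma emeasure_three_point_noise_nonzero: "emeasure three_point_noise {x. x \<noteq> 0} = ennreal (1/4)"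
proof -
  have support: "{x. x \<noteq> 0} \<inter> set_pmf three_point_pmf = {2, -2}"
    by (auto simp: set_pmf_three_point_pmf)
  have "emeasure three_point_noise {x. x \<noteq> 0} = emeasure three_point_pmf {x. x \<noteq> 0}"
    unfolding three_point_noise_def by (subst emeasure_distr) simp_all
  also have "\<dots> = emeasure three_point_pmf {2, -2}" by (metis emeasure_Int_set_pmf support)
  finally show ?thesis
    by (simp add: emeasure_measure_pmf_finite pmf_three_point_pmf flip: ennreal_plus)
qed

lemma three_point_noise_in_noise_class: "three_point_noise \<in> noise_class a \<tau>"
proof -
  have "measure three_point_noise {x. \<bar>x\<bar> > t} = 0" if "t \<ge> 2" for t
    unfolding three_point_noise_def using that
    by (subst measure_distr) (auto simp: measure_pmf_zero_iff set_pmf_three_point_pmf)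
  then show ?thesis
    by (auto simp: noise_class_def prob_space_three_point_noise integral_three_point_noise
        integrable_three_point_noise)
qed

lemma three_point_noise_risk_ge:
  assumes "d > 0"
  shows "ennreal (1/2)
    \<le> (\<integral>\<^sup>+\<xi>. ennreal ((sigma_hat_sq d \<xi> - 1)\<^sup>2) \<partial>PiM {..<d} (\<lambda>_. three_point_noise))"
proof -
  let ?Q = "PiM {..<d} (\<lambda>_. three_point_noise)"
  let ?N = "\<lambda>\<xi>::nat \<Rightarrow> real. card {i\<in>{..<d}. \<xi> i \<noteq> 0}"
  have "{x::real. x \<noteq> 0} = - {0}" by auto
  then have nonzero: "{x::real. x \<noteq> 0} \<in> sets three_point_noise"
    by (simp only: sets_three_point_noise borel_comp borel_singleton sets.empty_sets)
  have N_measurable: "(\<lambda>\<xi>. real (?N \<xi>)) \<in> borel_measurable ?Q"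
    using borel_measurable_card_components_in[OF finite_lessThan nonzero] unfolding mem_Collect_eq .
  have count_measurable: "(\<lambda>\<xi>. 2 / real d * ?N \<xi>) \<in> borel_measurable ?Q"
    by (intro borel_measurable_times borel_measurable_const N_measurable)
  have "(\<integral>\<^sup>+\<xi>. ennreal (2 / real d * ?N \<xi>) \<partial>?Q) = (\<integral>\<^sup>+\<xi>. ennreal (2 / real d) * ennreal (?N \<xi>) \<partial>?Q)"
    by (intro nn_integral_cong ennreal_mult) simp_all
  also have "\<dots> = ennreal (2 / real d) * (\<integral>\<^sup>+\<xi>. ennreal (?N \<xi>) \<partial>?Q)"
    by (intro nn_integral_cmult measurable_compose[OF N_measurable measurable_ennreal])
  also have "(\<integral>\<^sup>+\<xi>. ennreal (?N \<xi>) \<partial>?Q) = of_nat d * ennreal (1/4)"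
    using nn_integral_PiM_card_components_in[OF prob_space_three_point_noise finite_lessThan nonzero]
    by (simp add: emeasure_three_point_noise_nonzero ennreal_of_nat_eq_real_of_nat)
  also have "ennreal (2 / real d) * (of_nat d * ennreal (1/4)) = ennreal (1/2)"
    using assms by (simp add: ennreal_of_nat_eq_real_of_nat flip: ennreal_mult)
  finally have "ennreal (1 - 1/2) \<le> (\<integral>\<^sup>+\<xi>. ennreal (1 - 2 / real d * ?N \<xi>) \<partial>?Q)"
    by (intro prob_space.nn_integral_one_minus_ge[OF prob_space_PiM count_measurable]
        prob_space_three_point_noise) simp_all
  also have "\<dots> \<le> (\<integral>\<^sup>+\<xi>. ennreal ((sigma_hat_sq d \<xi> - 1)\<^sup>2) \<partial>?Q)"
    by (intro nn_integral_mono ennreal_leI sigma_hat_sq_error_ge)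
  finally show ?thesis by simp
qed

theorem proposition8:
  fixes \<tau> a :: real and s d :: nat
  assumes "\<tau> > 0" and "a \<ge> 2" and "1 \<le> s" and "s \<le> d" and "4 dvd d"
  shows "Sup {(\<integral>\<^sup>+ \<xi>. ennreal ((sigma_hat_sq d (\<lambda>i. \<theta> i + \<sigma> * \<xi> i) - \<sigma>\<^sup>2)\<^sup>2)
                   \<partial>(PiM {..<d} (\<lambda>_. P))) / ennreal (\<sigma> ^ 4)
             | P \<sigma> \<theta>. P \<in> noise_class a \<tau> \<and> \<sigma> > 0 \<and> \<theta> \<in> Theta d s}
         \<ge> (1 / 64 :: ennreal)"
proof -
  define \<theta>\<^sub>0 where "\<theta>\<^sub>0 = (\<lambda>i\<in>{..<d}. 0 :: real)"
  let ?risk = "\<integral>\<^sup>+\<xi>. ennreal ((sigma_hat_sq d \<xi> - 1)\<^sup>2) \<partial>PiM {..<d} (\<lambda>_. three_point_noise)"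
  have "\<theta>\<^sub>0 \<in> Theta d s" by (simp add: Theta_def \<theta>\<^sub>0_def)
  moreover have "sigma_hat_sq d (\<lambda>i. \<theta>\<^sub>0 i + \<xi> i) = sigma_hat_sq d \<xi>" for \<xi>
    by (rule sigma_hat_sq_cong) (simp add: \<theta>\<^sub>0_def)
  moreover have "x / 1 = x" for x :: ennreal by (simp add: divide_ennreal_def)
  moreover have "(1/64 :: ennreal) = ennreal (1/64)"
    by (metis divide_ennreal ennreal_1 ennreal_numeral zero_le_one zero_less_numeral)
  moreover have "ennreal (1/64) \<le> ennreal (1/2)" by (rule ennreal_leI) simp
  moreover have "ennreal (1/2) \<le> ?risk" using assms by (intro three_point_noise_risk_ge) simp
  ultimately show ?thesis
    using three_point_noise_in_noise_class
    by (intro order_trans[OF _ Sup_upper] CollectI exI[of _ three_point_noise] exI[of _ 1]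
        exI[of _ \<theta>\<^sub>0]) simp_all
qed

end
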